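(* Suppose that $2\le n_0<\infty$ and that $S$ is submultiplicative on $[1,n_0]$. Then there exists $\varepsilon_0>0$ such that for all $0<\varepsilon<\varepsilon_0$ the extension $S_\varepsilon$ of $S$ to $[1,n_0^2]$ defined by $$S_\varepsilon(x)=\begin{cases}S(x),&1\le x\le n_0,\\ S(n_0)+\varepsilon(x-n_0),& n_0<x\le n_0^2,\end{cases}$$ is submultiplicative on $[1,n_0^2]$.
   Context: Let $2\le n_0\le\infty$ and let $S$ be a real-valued function on $[1,n_0]$ (on $[1,\infty)$ if $n_0=\infty$). $S$ is called submultiplicative on $[1,n_0]$ if: (a) $S$ is piecewise-linear, continuous, strictly increasing and concave; (b) $S(x)=x$ for $1\le x\le 2$; (c) $S(xy)\le S(x)S(y)$ for all $x,y$ with $1\le x,y,xy\le n_0$. *)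

theory Defs
  imports "HOL-Analysis.Analysis"
begin

definition piecewise_linear_on :: "real \<Rightarrow> real \<Rightarrow> (real \<Rightarrow> real) \<Rightarrow> bool" where
  "piecewise_linear_on a b S \<longleftrightarrow>
     (\<exists>P. finite P \<and> P \<subseteq> {a..b} \<and> a \<in> P \<and> b \<in> P \<and>
        (\<forall>u\<in>P. \<forall>v\<in>P. u < v \<and> (\<forall>w\<in>P. \<not> (u < w \<and> w < v)) \<longrightarrow>
            (\<exists>m c. \<forall>x\<in>{u..v}. S x = m * x + c)))"

definition submultiplicative_on :: "real \<Rightarrow> (real \<Rightarrow> real) \<Rightarrow> bool" where
  "submultiplicative_on n0 S \<longleftrightarrow>
     piecewise_linear_on 1 n0 S \<and> continuous_on {1..n0} S \<and>
     strict_mono_on {1..n0} S \<and> concave_on {1..n0} S \<and>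
     (\<forall>x\<in>{1..2}. S x = x) \<and>
     (\<forall>x y. 1 \<le> x \<and> 1 \<le> y \<and> x * y \<le> n0 \<longrightarrow> S (x * y) \<le> S x * S y)"

end

theory Submission
  imports Defs
begin

text \<open>Let m > 0 be the slope of the last linear piece of S. By concavity every chord of S
has slope at least m, so for \<open>\<epsilon> \<le> m\<close> gluing on a line of slope \<open>\<epsilon>\<close> keeps the function
concave. For submultiplicativity only products \<open>x y > n0\<close> are new. If \<open>x > n0\<close>, then
\<open>y \<le> n0\<close> and the excess \<open>\<epsilon> x (y - 1)\<close> is paid for by \<open>S y - 1 \<ge> m (y - 1)\<close>. If
\<open>x, y \<le> n0\<close>, put \<open>z = n0 / x\<close>: then \<open>S n0 \<le> S x S z\<close>, and the excess \<open>\<epsilon> x (y - z)\<close> is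
paid for by \<open>S x (S y - S z) \<ge> m (y - z)\<close>. Both need \<open>\<epsilon> x \<le> m\<close>, i.e. \<open>\<epsilon> \<le> m / n0\<^sup>2\<close>.\<close>

definition affine_extension :: "real \<Rightarrow> real \<Rightarrow> (real \<Rightarrow> real) \<Rightarrow> real \<Rightarrow> real" where
  "affine_extension b e f x = (if x \<le> b then f x else f b + e * (x - b))"

lemma concave_on_chord:
  fixes f :: "real \<Rightarrow> real"
  assumes "concave_on I f" "x \<in> I" "y \<in> I" "x \<le> w" "w \<le> y" "x < y"
  shows "(f y - f x) * (w - x) \<le> (f w - f x) * (y - x)"
proof -
  define t where "t = (w - x) / (y - x)"
  have t: "0 \<le> t" "t \<le> 1" and tw: "t * (y - x) = w - x"
    using assms by (auto simp: t_def field_simps)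
  have "(1 - t) *\<^sub>R x + t *\<^sub>R y = w"
    using tw by (simp add: algebra_simps)
  then have "t * (f y - f x) \<le> f w - f x"
    using concave_onD[OF assms(1) t assms(2,3)] by (simp add: algebra_simps)
  then have "t * (f y - f x) * (y - x) \<le> (f w - f x) * (y - x)"
    using assms(6) by (simp add: mult_right_mono)
  then show ?thesis
    by (simp add: tw[symmetric] algebra_simps)
qed

lemma concave_on_chordI:
  fixes f :: "real \<Rightarrow> real"
  assumes "convex I"
    and chord: "\<And>x w y. x \<in> I \<Longrightarrow> y \<in> I \<Longrightarrow> x < w \<Longrightarrow> w < y \<Longrightarrow>
                  (f y - f x) * (w - x) \<le> (f w - f x) * (y - x)"
  shows "concave_on I f"
proof (rule concave_on_linorderI[OF _ assms(1)])
  fix t x y :: real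
  assume t: "0 < t" "t < 1" and xy: "x \<in> I" "y \<in> I" "x < y"
  define w where "w = (1 - t) * x + t * y"
  have wx: "w - x = t * (y - x)" and yw: "y - w = (1 - t) * (y - x)"
    by (simp_all add: w_def algebra_simps)
  then have "x < w" "w < y"
    using t xy by (metis diff_gt_0_iff_gt mult_pos_pos)+
  with chord xy have "(t * (f y - f x)) * (y - x) \<le> (f w - f x) * (y - x)"
    by (metis wx mult.assoc mult.commute)
  then have "t * (f y - f x) \<le> f w - f x"
    using xy by simp
  then show "(1 - t) * f x + t * f y \<le> f ((1 - t) *\<^sub>R x + t *\<^sub>R y)"
    by (simp add: w_def algebra_simps)
qed

lemma piecewise_linear_on_last_piece:
  assumes "piecewise_linear_on a b f" "a < b"
  obtains u m c where "a \<le> u" "u < b" "\<And>x. x \<in> {u..b} \<Longrightarrow> f x = m * x + c"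
proof -
  obtain P where P: "finite P" "P \<subseteq> {a..b}" "a \<in> P" "b \<in> P"
    and affine: "\<forall>u\<in>P. \<forall>v\<in>P. u < v \<and> (\<forall>w\<in>P. \<not> (u < w \<and> w < v)) \<longrightarrow>
                   (\<exists>m c. \<forall>x\<in>{u..v}. f x = m * x + c)"
    using assms(1) unfolding piecewise_linear_on_def by blast
  define u where "u = Max {p\<in>P. p < b}"
  have "u \<in> {p\<in>P. p < b}"
    unfolding u_def using P assms(2) by (intro Max_in) auto
  moreover have "\<forall>w\<in>P. \<not> (u < w \<and> w < b)"
    using P(1) Max_ge[of "{p\<in>P. p < b}"] unfolding u_def by fastforce
  ultimately obtain m c where "\<forall>x\<in>{u..b}. f x = m * x + c"
    using affine P(4) by blast
  moreover have "a \<le> u"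
    using \<open>u \<in> {p\<in>P. p < b}\<close> P(2) by auto
  ultimately show ?thesis
    using that \<open>u \<in> {p\<in>P. p < b}\<close> by blast
qed

lemma piecewise_linear_on_affine_extension:
  assumes "piecewise_linear_on a b f" "b < c"
  shows "piecewise_linear_on a c (affine_extension b e f)"
proof -
  obtain P where P: "finite P" "P \<subseteq> {a..b}" "a \<in> P" "b \<in> P"
    and affine: "\<forall>u\<in>P. \<forall>v\<in>P. u < v \<and> (\<forall>w\<in>P. \<not> (u < w \<and> w < v)) \<longrightarrow>
                   (\<exists>m c. \<forall>x\<in>{u..v}. f x = m * x + c)"
    using assms(1) unfolding piecewise_linear_on_def by blast
  show ?thesis
    unfolding piecewise_linear_on_def
  proof (intro exI[of _ "insert c P"] conjI ballI impI)
    show "finite (insert c P)" "insert c P \<subseteq> {a..c}" "a \<in> insert c P" "c \<in> insert c P"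
      using P assms(2) by auto
    fix u v assume u: "u \<in> insert c P" and v: "v \<in> insert c P"
      and uv: "u < v \<and> (\<forall>w\<in>insert c P. \<not> (u < w \<and> w < v))"
    show "\<exists>m c. \<forall>x\<in>{u..v}. affine_extension b e f x = m * x + c"
    proof (cases "v = c")
      case True
      then have "u = b"
        using u uv P assms(2) by force
      then show ?thesis
        using True by (intro exI[of _ e] exI[of _ "f b - e * b"]) (auto simp: affine_extension_def algebra_simps)
    next
      case False
      then have "u \<in> P" "v \<in> P" "v \<le> b"
        using u v uv P assms(2) by auto
      then obtain m' c' where "\<forall>x\<in>{u..v}. f x = m' * x + c'"
        using affine uv by blast
      then show ?thesis
        using \<open>v \<le> b\<close> by (intro exI[of _ m'] exI[of _ c']) (auto simp: affine_extension_def)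
    qed
  qed
qed

lemma concave_on_increment_ge_last_slope:
  fixes f :: "real \<Rightarrow> real"
  assumes conc: "concave_on {a..b} f" and u: "a \<le> u" "u < b"
    and affine: "\<And>x. x \<in> {u..b} \<Longrightarrow> f x = m * x + c"
    and zy: "a \<le> z" "z \<le> y" "y \<le> b"
  shows "m * (y - z) \<le> f y - f z"
proof -
  have to_end: "m * (b - x) \<le> f b - f x" if x: "a \<le> x" "x \<le> b" for x
  proof (cases "u \<le> x")
    case True
    then show ?thesis
      using affine x by (simp add: algebra_simps)
  next
    case False
    have "(f b - f x) * (u - x) \<le> (f u - f x) * (b - x)"
      using concave_on_chord[OF conc, of x b u] x u False by auto
    moreover have "f u = f b - m * (b - u)"
      using affine u by (simp add: algebra_simps)
    ultimately have "(m * (b - x)) * (b - u) \<le> (f b - f x) * (b - u)"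
      by (simp add: algebra_simps)
    then show ?thesis
      using u by simp
  qed
  show ?thesis
  proof (cases "z < y")
    case True
    have "(f b - f z) * (y - z) \<le> (f y - f z) * (b - z)"
      using concave_on_chord[OF conc, of z b y] zy True by auto
    moreover have "m * (b - z) * (y - z) \<le> (f b - f z) * (y - z)"
      using to_end[of z] zy True by (intro mult_right_mono) auto
    ultimately have "(m * (y - z)) * (b - z) \<le> (f y - f z) * (b - z)"
      by (simp add: algebra_simps)
    then show ?thesis
      using zy True by simp
  qed (use zy in simp)
qed

lemma continuous_on_affine_extension:
  assumes "continuous_on {a..b} f" "a \<le> b"
  shows "continuous_on {a..c} (affine_extension b e f)"
proof -
  have "continuous_on {a..b} (affine_extension b e f)"
    using assms(1) by (rule continuous_on_eq) (simp add: affine_extension_def)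
  moreover have "continuous_on {b..c} (\<lambda>x. f b + e * (x - b))"
    by (intro continuous_intros)
  then have "continuous_on {b..c} (affine_extension b e f)"
    by (rule continuous_on_eq) (auto simp: affine_extension_def)
  ultimately have "continuous_on ({a..b} \<union> {b..c}) (affine_extension b e f)"
    by (intro continuous_on_closed_Un) auto
  then show ?thesis
    by (rule continuous_on_subset) (use assms(2) in auto)
qed

lemma strict_mono_on_affine_extension:
  assumes mono: "strict_mono_on {a..b} f" and "0 < e"
  shows "strict_mono_on {a..c} (affine_extension b e f)"
proof (rule strict_mono_onI)
  fix x y assume x: "x \<in> {a..c}" and y: "y \<in> {a..c}" and "x < y"
  consider "y \<le> b" | "x \<le> b" "b < y" | "b < x"
    by linarith
  then show "affine_extension b e f x < affine_extension b e f y"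
  proof cases
    case 1
    then show ?thesis
      using x y \<open>x < y\<close> strict_mono_onD[OF mono] by (auto simp: affine_extension_def)
  next
    case 2
    then have "f x \<le> f b"
      using x strict_mono_onD[OF mono, of x b] by (cases "x = b") auto
    moreover have "0 < e * (y - b)"
      using 2 \<open>0 < e\<close> by simp
    ultimately show ?thesis
      using 2 by (simp add: affine_extension_def)
  next
    case 3
    then show ?thesis
      using \<open>x < y\<close> \<open>0 < e\<close> by (simp add: affine_extension_def)
  qed
qed

lemma affine_extension_chord_across:
  fixes f :: "real \<Rightarrow> real"
  assumes conc: "concave_on {a..b} f"
    and slope: "\<And>z. z \<in> {a..b} \<Longrightarrow> e * (b - z) \<le> f b - f z"
    and "a \<le> x" "x < w" "w < y" "x < b" "b < y"
  defines "g \<equiv> affine_extension b e f"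
  shows "(g y - g x) * (w - x) \<le> (g w - g x) * (y - x)"
proof -
  define D where "D = f b - f x"
  have gx: "g x = f x" and gy: "g y - g x = D + e * (y - b)"
    using assms by (simp_all add: g_def affine_extension_def D_def)
  have slope_x: "0 \<le> D - e * (b - x)"
    using slope[of x] assms by (simp add: D_def)
  show ?thesis
  proof (cases "w \<le> b")
    case True
    have "D * (w - x) \<le> (f w - f x) * (b - x)"
      using concave_on_chord[OF conc, of x b w] assms True by (simp add: D_def)
    then have "D * (w - x) * (y - x) \<le> (f w - f x) * (b - x) * (y - x)"
      using assms by (intro mult_right_mono) auto
    moreover have "((D + e * (y - b)) * (w - x)) * (b - x)
                   = D * (w - x) * (y - x) - (D - e * (b - x)) * ((w - x) * (y - b))"
      by (simp add: algebra_simps)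
    moreover have "0 \<le> (D - e * (b - x)) * ((w - x) * (y - b))"
      using slope_x assms by simp
    ultimately have "((D + e * (y - b)) * (w - x)) * (b - x) \<le> ((f w - f x) * (y - x)) * (b - x)"
      by (simp add: algebra_simps)
    moreover have "g w - g x = f w - f x"
      using gx True by (simp add: g_def affine_extension_def)
    ultimately show ?thesis
      unfolding gy using assms by simp
  next
    case False
    have gw: "g w - g x = D + e * (w - b)"
      using False assms by (simp add: g_def affine_extension_def D_def)
    have "(D + e * (y - b)) * (w - x) + (D - e * (b - x)) * (y - w)
          = (D + e * (w - b)) * (y - x)"
      by (simp add: algebra_simps)
    moreover have "0 \<le> (D - e * (b - x)) * (y - w)"
      using slope_x assms by simp
    ultimately show ?thesis
      unfolding gy gw by linarith
  qed
qed

lemma concave_on_affine_extension: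
  fixes f :: "real \<Rightarrow> real"
  assumes conc: "concave_on {a..b} f"
    and slope: "\<And>z. z \<in> {a..b} \<Longrightarrow> e * (b - z) \<le> f b - f z"
  shows "concave_on {a..c} (affine_extension b e f)"
proof (rule concave_on_chordI)
  let ?g = "affine_extension b e f"
  fix x w y assume x: "x \<in> {a..c}" and y: "y \<in> {a..c}" and xw: "x < w" and wy: "w < y"
  consider "y \<le> b" | "b \<le> x" | "x < b" "b < y"
    by linarith
  then show "(?g y - ?g x) * (w - x) \<le> (?g w - ?g x) * (y - x)"
  proof cases
    case 1
    then show ?thesis
      using concave_on_chord[OF conc, of x y w] x y xw wy by (simp add: affine_extension_def)
  next
    case 2
    then show ?thesis
      using xw wy by (simp add: affine_extension_def algebra_simps)
  next
    case 3
    then show ?thesis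
      using affine_extension_chord_across[OF conc slope] x xw wy by simp
  qed
qed simp

lemma submultiplicative_on_ge_one:
  assumes "submultiplicative_on n0 S" "x \<in> {1..n0}"
  shows "1 \<le> S x"
proof -
  have "S 1 = 1" and mono: "strict_mono_on {1..n0} S"
    using assms unfolding submultiplicative_on_def by auto
  then show ?thesis
    using strict_mono_onD[OF mono, of 1 x] assms(2) by (cases "x = 1") auto
qed

lemma submultiplicative_on_last_slope:
  assumes sm: "submultiplicative_on n0 S" and "1 < n0"
  obtains m where "0 < m" "\<And>z y. 1 \<le> z \<Longrightarrow> z \<le> y \<Longrightarrow> y \<le> n0 \<Longrightarrow> m * (y - z) \<le> S y - S z"
proof -
  have "piecewise_linear_on 1 n0 S" and mono: "strict_mono_on {1..n0} S"
    and conc: "concave_on {1..n0} S"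
    using sm unfolding submultiplicative_on_def by auto
  then obtain u m c where u: "1 \<le> u" "u < n0" and affine: "\<And>x. x \<in> {u..n0} \<Longrightarrow> S x = m * x + c"
    using piecewise_linear_on_last_piece \<open>1 < n0\<close> by metis
  have "m * u + c < m * n0 + c"
    using strict_mono_onD[OF mono, of u n0] u affine by simp
  then have "0 < m"
    using u by (simp add: mult_less_cancel_left)
  moreover note concave_on_increment_ge_last_slope[OF conc u affine]
  ultimately show ?thesis
    using that by blast
qed

context
  fixes n0 m \<epsilon> :: real and S :: "real \<Rightarrow> real"
  assumes sm: "submultiplicative_on n0 S" and n0_ge_2: "2 \<le> n0"
    and slope: "\<And>z y. 1 \<le> z \<Longrightarrow> z \<le> y \<Longrightarrow> y \<le> n0 \<Longrightarrow> m * (y - z) \<le> S y - S z"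
    and eps: "0 < \<epsilon>" "\<epsilon> * n0\<^sup>2 \<le> m"
begin

lemma affine_extension_mult_le_large_factor:
  assumes x: "n0 < x" and y: "1 \<le> y" and xy: "x * y \<le> n0\<^sup>2"
  shows "affine_extension n0 \<epsilon> S (x * y) \<le> affine_extension n0 \<epsilon> S x * affine_extension n0 \<epsilon> S y"
proof -
  let ?E = "affine_extension n0 \<epsilon> S"
  have "x \<le> x * y"
    using x y n0_ge_2 mult_left_mono[of 1 y x] by simp
  have "y \<le> n0"
  proof (rule ccontr)
    assume "\<not> y \<le> n0"
    then have "n0 * n0 < x * y"
      using x n0_ge_2 by (intro mult_strict_mono) auto
    then show False
      using xy by (simp add: power2_eq_square)
  qed
  have Sy: "1 \<le> S y"
    using submultiplicative_on_ge_one[OF sm] y \<open>y \<le> n0\<close> by simp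
  have "1 \<le> S n0" "0 \<le> \<epsilon> * (x - n0)"
    using submultiplicative_on_ge_one[OF sm, of n0] x n0_ge_2 eps by auto
  then have Ex: "1 \<le> ?E x"
    using x by (simp add: affine_extension_def)
  have "\<epsilon> * x \<le> \<epsilon> * n0\<^sup>2"
    using \<open>x \<le> x * y\<close> xy eps by simp
  then have "\<epsilon> * x \<le> m"
    using eps by linarith
  have "\<epsilon> * (x * y - x) = (\<epsilon> * x) * (y - 1)"
    by (simp add: algebra_simps)
  also have "\<dots> \<le> m * (y - 1)"
    using \<open>\<epsilon> * x \<le> m\<close> y by (intro mult_right_mono) auto
  also have "\<dots> \<le> S y - 1"
    using slope[of 1 y] sm y \<open>y \<le> n0\<close> n0_ge_2 by (simp add: submultiplicative_on_def)
  also have "\<dots> \<le> ?E x * (S y - 1)"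
    using Ex Sy mult_right_mono[of 1 "?E x" "S y - 1"] by simp
  finally have "?E x + \<epsilon> * (x * y - x) \<le> ?E x * S y"
    by (simp add: algebra_simps)
  moreover have "?E (x * y) = ?E x + \<epsilon> * (x * y - x)" "?E y = S y"
    using x \<open>x \<le> x * y\<close> \<open>y \<le> n0\<close> by (auto simp: affine_extension_def algebra_simps)
  ultimately show ?thesis
    by simp
qed

lemma affine_extension_mult_le_small_factors:
  assumes x: "1 \<le> x" "x \<le> n0" and y: "y \<le> n0" and xy: "n0 < x * y"
  shows "affine_extension n0 \<epsilon> S (x * y) \<le> affine_extension n0 \<epsilon> S x * affine_extension n0 \<epsilon> S y"
proof -
  define z where "z = n0 / x"
  have xz: "x * z = n0" and z: "1 \<le> z" "z < y"
    using x xy by (auto simp: z_def field_simps)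
  have "1 * n0 \<le> n0 * n0"
    using n0_ge_2 by (intro mult_right_mono) auto
  then have "x \<le> n0\<^sup>2"
    using x unfolding power2_eq_square by linarith
  then have "\<epsilon> * x \<le> \<epsilon> * n0\<^sup>2"
    using eps by simp
  then have "\<epsilon> * x \<le> m"
    using eps by linarith
  then have "\<epsilon> * x * (y - z) \<le> m * (y - z)"
    using z by (intro mult_right_mono) auto
  also have "\<dots> \<le> S y - S z"
    using slope z y by simp
  finally have "\<epsilon> * x * (y - z) \<le> S y - S z" .
  moreover have "0 \<le> \<epsilon> * x * (y - z)"
    using eps x z by simp
  ultimately have "\<epsilon> * x * (y - z) \<le> S x * (S y - S z)"
    using submultiplicative_on_ge_one[OF sm, of x] x mult_right_mono[of 1 "S x" "S y - S z"] by simp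
  then have "S n0 + \<epsilon> * (x * y - n0) \<le> S n0 + S x * (S y - S z)"
    by (simp add: xz[symmetric] algebra_simps)
  also have "S n0 \<le> S x * S z"
    using sm x z xz unfolding submultiplicative_on_def by (metis order_refl)
  finally show ?thesis
    using x y xy by (simp add: affine_extension_def algebra_simps)
qed

lemma affine_extension_mult_le:
  assumes "1 \<le> x" "1 \<le> y" "x * y \<le> n0\<^sup>2"
  shows "affine_extension n0 \<epsilon> S (x * y) \<le> affine_extension n0 \<epsilon> S x * affine_extension n0 \<epsilon> S y"
proof -
  have "x \<le> x * y" "y \<le> x * y"
    using assms mult_left_mono[of 1 y x] mult_right_mono[of 1 x y] by auto
  consider "x * y \<le> n0" | "n0 < x" | "n0 < y" | "x \<le> n0" "y \<le> n0" "n0 < x * y"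
    by linarith
  then show ?thesis
  proof cases
    case 1
    then have "x \<le> n0" "y \<le> n0"
      using \<open>x \<le> x * y\<close> \<open>y \<le> x * y\<close> by linarith+
    then show ?thesis
      using sm assms 1 by (simp add: submultiplicative_on_def affine_extension_def)
  next
    case 2
    then show ?thesis
      using affine_extension_mult_le_large_factor assms by blast
  next
    case 3
    then show ?thesis
      using affine_extension_mult_le_large_factor[of y x] assms by (simp add: mult.commute)
  next
    case 4
    then show ?thesis
      using affine_extension_mult_le_small_factors assms by blast
  qed
qed

lemma submultiplicative_on_affine_extension:
  "submultiplicative_on (n0\<^sup>2) (affine_extension n0 \<epsilon> S)"
proof -
  have "n0 < n0\<^sup>2"
    using n0_ge_2 by (simp add: power2_eq_square)
  have "\<epsilon> * 1 \<le> \<epsilon> * n0\<^sup>2"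
    using \<open>n0 < n0\<^sup>2\<close> n0_ge_2 eps by (intro mult_left_mono) auto
  then have "\<epsilon> \<le> m"
    using eps by linarith
  have slope_eps: "\<epsilon> * (n0 - z) \<le> S n0 - S z" if "z \<in> {1..n0}" for z
  proof -
    have "\<epsilon> * (n0 - z) \<le> m * (n0 - z)"
      using \<open>\<epsilon> \<le> m\<close> that by (intro mult_right_mono) auto
    also have "\<dots> \<le> S n0 - S z"
      using slope that by simp
    finally show ?thesis .
  qed
  have "\<forall>x\<in>{1..2}. S x = x"
    using sm by (simp add: submultiplicative_on_def)
  then have "\<forall>x\<in>{1..2}. affine_extension n0 \<epsilon> S x = x"
    using n0_ge_2 by (simp add: affine_extension_def)
  then show ?thesis
    using sm n0_ge_2 eps \<open>n0 < n0\<^sup>2\<close> affine_extension_mult_le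
      concave_on_affine_extension[OF _ slope_eps]
    unfolding submultiplicative_on_def
    by (auto intro: piecewise_linear_on_affine_extension continuous_on_affine_extension
        strict_mono_on_affine_extension)
qed

end

theorem lemma2p2:
  fixes n0 :: real and S :: "real \<Rightarrow> real"
  assumes "2 \<le> n0"
    and "submultiplicative_on n0 S"
  shows "\<exists>\<epsilon>0>0. \<forall>\<epsilon>. 0 < \<epsilon> \<and> \<epsilon> < \<epsilon>0 \<longrightarrow>
           submultiplicative_on (n0^2)
             (\<lambda>x. if x \<le> n0 then S x else S n0 + \<epsilon> * (x - n0))"
proof -
  have "1 < n0"
    using assms(1) by simp
  then obtain m where "0 < m"
    and slope: "\<And>z y. 1 \<le> z \<Longrightarrow> z \<le> y \<Longrightarrow> y \<le> n0 \<Longrightarrow> m * (y - z) \<le> S y - S z"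
    using submultiplicative_on_last_slope[OF assms(2)] by blast
  show ?thesis
  proof (intro exI[of _ "m / n0\<^sup>2"] conjI allI impI)
    show "0 < m / n0\<^sup>2"
      using \<open>0 < m\<close> assms(1) by simp
    fix \<epsilon> assume "0 < \<epsilon> \<and> \<epsilon> < m / n0\<^sup>2"
    then have "0 < \<epsilon>" "\<epsilon> * n0\<^sup>2 \<le> m"
      using assms(1) by (auto simp: field_simps)
    from submultiplicative_on_affine_extension[OF assms(2,1) slope this]
    show "submultiplicative_on (n0\<^sup>2) (\<lambda>x. if x \<le> n0 then S x else S n0 + \<epsilon> * (x - n0))"
      unfolding affine_extension_def .
  qed
qed

end
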